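(* Let $C$ be a finite set of conditional constructor set constraints and let $\mathrm{Sat}(C)$ be its saturation. Then for every assignment $\theta$: $\theta \models C$ if and only if $\theta \models \mathrm{Sat}(C)$.
   Context: Fix a finite set $\underline{D}$ of datatype identifiers. Each $d \in \underline{D}$ has a finite set $\mathrm{Con}(d)$ of constructors. There is a countable supply of refinement variables $X, Y, Z, \dots$. An assignment $\theta$ maps each refinement variable $X$ to a function that sends each $d \in \underline{D}$ to a subset $\theta(X)(d) \subseteq \mathrm{Con}(d)$. A constructor set expression over $d$ is either a finite set $\{k_1,\dots,k_m\} \subseteq \mathrm{Con}(d)$ or a pair $X(d)$. Its meaning is $\theta[\![X(d)]\!] = \theta(X)(d)$ and $\theta[\![\{k_1,\dots,k_m\}]\!] = \{k_1,\dots,k_m\}$. An inclusion constraint $S_1 \subseteq S_2$ relates two expressions over the same $d$, and $k \in S$ abbreviates $\{k\} \subseteq S$. A (conditional) constraint $\phi \mathbin{?} S_1 \subseteq S_2$ consists of a finite set $\phi$ (the guard) of inclusions of the form $k \in X(d)$ together with an inclusion $S_1 \subseteq S_2$ (the body). $\theta$ satisfies $\phi \mathbin{?} S_1 \subseteq S_2$ if the following holds: whenever $k \in \theta(X)(d)$ for every $k \in X(d)$ in $\phi$, then $\theta[\![S_1]\!] \subseteq \theta[\![S_2]\!]$. $\theta \models C$ means $\theta$ satisfies every constraint of $C$. A constraint is atomic if its body has one of the forms $X(d) \subseteq Y(d)$, $X(d) \subseteq \{k_1,\dots,k_m\}$, $k \in X(d)$, or $k \in \emptyset$. Every constraint is converted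 to an equivalent finite set of atomic constraints with the same guard, as follows. A body $\{k_1,\dots,k_m\} \subseteq S$ is split into the bodies $k_i \in S$. A body $k \in \{k_1,\dots,k_m\}$ is dropped if $k$ is one of the $k_i$, and otherwise becomes $k \in \emptyset$. The saturation rules, with conclusions converted to atomic form, are: - (Transitivity) from $\phi \mathbin{?} S_1 \subseteq S_2$ and $\psi \mathbin{?} S_2 \subseteq S_3$, derive $\phi \cup \psi \mathbin{?} S_1 \subseteq S_3$; - (Satisfaction) from $\phi \mathbin{?} k \in X(d)$ and $\psi \cup \{k \in X(d)\} \mathbin{?} S_1 \subseteq S_2$, derive $\phi \cup \psi \mathbin{?} S_1 \subseteq S_2$; - (Weakening) from $\phi \mathbin{?} X(d) \subseteq Y(d)$ and $\psi \cup \{k \in Y(d)\} \mathbin{?} S_1 \subseteq S_2$, derive $\phi \cup \psi \cup \{k \in X(d)\} \mathbin{?} S_1 \subseteq S_2$. An atomic constraint set is saturated if it is closed under these rules. $\mathrm{Sat}(C)$ is the saturated atomic constraint set obtained from (the atomic form of) $C$ by iteratively applying the rules. *)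

theory Defs
  imports Main "HOL-Library.Countable"
begin

text \<open>Constructor set expressions: a literal finite set of constructors, or a
  refinement variable X (applied to the datatype d recorded in the constraint).\<close>
datatype ('v, 'k) sexp = Lit "'k set" | Var 'v

text \<open>Guard atoms (k, X, d) stand for k \<in> X(d).  A constraint is
  (guard, d, S1, S2) standing for guard ? S1 \<subseteq> S2 with S1, S2 over d.\<close>
type_synonym ('v, 'k, 'd) guard = "('k \<times> 'v \<times> 'd) set"
type_synonym ('v, 'k, 'd) constr = "('v, 'k, 'd) guard \<times> 'd \<times> ('v, 'k) sexp \<times> ('v, 'k) sexp"

type_synonym ('v, 'k, 'd) assignment = "'v \<Rightarrow> 'd \<Rightarrow> 'k set"

definition is_assignment :: "'d set \<Rightarrow> ('d \<Rightarrow> 'k set) \<Rightarrow> ('v, 'k, 'd) assignment \<Rightarrow> bool" where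
  "is_assignment D Con \<theta> \<longleftrightarrow> (\<forall>X. \<forall>d\<in>D. \<theta> X d \<subseteq> Con d)"

fun sem :: "('v, 'k, 'd) assignment \<Rightarrow> 'd \<Rightarrow> ('v, 'k) sexp \<Rightarrow> 'k set" where
  "sem \<theta> d (Lit K) = K"
| "sem \<theta> d (Var X) = \<theta> X d"

definition wf_sexp :: "('d \<Rightarrow> 'k set) \<Rightarrow> 'd \<Rightarrow> ('v, 'k) sexp \<Rightarrow> bool" where
  "wf_sexp Con d S \<longleftrightarrow> (case S of Lit K \<Rightarrow> finite K \<and> K \<subseteq> Con d | Var X \<Rightarrow> True)"

definition wf_constr :: "'d set \<Rightarrow> ('d \<Rightarrow> 'k set) \<Rightarrow> ('v, 'k, 'd) constr \<Rightarrow> bool" where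
  "wf_constr D Con c \<longleftrightarrow> (case c of (\<phi>, d, S1, S2) \<Rightarrow>
      finite \<phi> \<and> (\<forall>(k, X, d') \<in> \<phi>. d' \<in> D \<and> k \<in> Con d') \<and>
      d \<in> D \<and> wf_sexp Con d S1 \<and> wf_sexp Con d S2)"

definition satisfies :: "('v, 'k, 'd) assignment \<Rightarrow> ('v, 'k, 'd) constr \<Rightarrow> bool" where
  "satisfies \<theta> c \<longleftrightarrow> (case c of (\<phi>, d, S1, S2) \<Rightarrow>
      (\<forall>(k, X, d') \<in> \<phi>. k \<in> \<theta> X d') \<longrightarrow> sem \<theta> d S1 \<subseteq> sem \<theta> d S2)"

definition models :: "('v, 'k, 'd) assignment \<Rightarrow> ('v, 'k, 'd) constr set \<Rightarrow> bool" where
  "models \<theta> C \<longleftrightarrow> (\<forall>c\<in>C. satisfies \<theta> c)"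

fun atomize :: "('v, 'k, 'd) constr \<Rightarrow> ('v, 'k, 'd) constr set" where
  "atomize (\<phi>, d, Var X, S) = {(\<phi>, d, Var X, S)}"
| "atomize (\<phi>, d, Lit K, Var Y) = {(\<phi>, d, Lit {k}, Var Y) | k. k \<in> K}"
| "atomize (\<phi>, d, Lit K, Lit K') = {(\<phi>, d, Lit {k}, Lit {}) | k. k \<in> K \<and> k \<notin> K'}"

inductive_set Sat :: "('v, 'k, 'd) constr set \<Rightarrow> ('v, 'k, 'd) constr set"
  for C :: "('v, 'k, 'd) constr set" where
  base: "c \<in> C \<Longrightarrow> a \<in> atomize c \<Longrightarrow> a \<in> Sat C"
| trans: "(\<phi>, d, S1, S2) \<in> Sat C \<Longrightarrow> (\<psi>, d, S2, S3) \<in> Sat C \<Longrightarrow>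
          a \<in> atomize (\<phi> \<union> \<psi>, d, S1, S3) \<Longrightarrow> a \<in> Sat C"
| satisf: "(\<phi>, d, Lit {k}, Var X) \<in> Sat C \<Longrightarrow>
           (\<psi> \<union> {(k, X, d)}, d', S1, S2) \<in> Sat C \<Longrightarrow>
           a \<in> atomize (\<phi> \<union> \<psi>, d', S1, S2) \<Longrightarrow> a \<in> Sat C"
| weaken: "(\<phi>, d, Var X, Var Y) \<in> Sat C \<Longrightarrow>
           (\<psi> \<union> {(k, Y, d)}, d', S1, S2) \<in> Sat C \<Longrightarrow>
           a \<in> atomize (\<phi> \<union> \<psi> \<union> {(k, X, d)}, d', S1, S2) \<Longrightarrow> a \<in> Sat C"

end

theory Submission
  imports Defs
begin

text \<open>Every saturation rule is sound: an assignment satisfying its premises satisfies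
  its conclusion, and conversion to atomic form preserves satisfaction.  Hence a model
  of C is a model of Sat(C) by rule induction; conversely C is recovered from Sat(C)
  because Sat(C) contains the atomic form of C.\<close>

lemma satisfies_Lit_iff_singletons:
  "satisfies \<theta> (\<phi>, d, Lit K, S) \<longleftrightarrow> (\<forall>k\<in>K. satisfies \<theta> (\<phi>, d, Lit {k}, S))"
  unfolding satisfies_def by auto

lemma satisfies_atomize_iff:
  "(\<forall>a\<in>atomize c. satisfies \<theta> a) \<longleftrightarrow> satisfies \<theta> c"
proof (induction c rule: atomize.induct)
  case (2 \<phi> d K Y)
  then show ?case
    by (subst satisfies_Lit_iff_singletons) auto
next
  case (3 \<phi> d K K')
  have "satisfies \<theta> (\<phi>, d, Lit {k}, Lit K') \<longleftrightarrow>
      k \<in> K' \<or> satisfies \<theta> (\<phi>, d, Lit {k}, Lit {})" for k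
    unfolding satisfies_def by auto
  then show ?case
    by (subst satisfies_Lit_iff_singletons) auto
qed simp

lemma satisfies_trans:
  assumes "satisfies \<theta> (\<phi>, d, S1, S2)" and "satisfies \<theta> (\<psi>, d, S2, S3)"
  shows "satisfies \<theta> (\<phi> \<union> \<psi>, d, S1, S3)"
  using assms unfolding satisfies_def by blast

lemma satisfies_discharge_guard:
  assumes "satisfies \<theta> (\<phi>, d, Lit {k}, Var X)"
    and "satisfies \<theta> (\<psi> \<union> {(k, X, d)}, d', S1, S2)"
  shows "satisfies \<theta> (\<phi> \<union> \<psi>, d', S1, S2)"
  using assms unfolding satisfies_def by auto

lemma satisfies_weaken_guard:
  assumes "satisfies \<theta> (\<phi>, d, Var X, Var Y)"
    and "satisfies \<theta> (\<psi> \<union> {(k, Y, d)}, d', S1, S2)"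
  shows "satisfies \<theta> (\<phi> \<union> \<psi> \<union> {(k, X, d)}, d', S1, S2)"
  using assms unfolding satisfies_def by (auto simp: Ball_def)

lemma models_Sat:
  assumes "models \<theta> C"
  shows "models \<theta> (Sat C)"
  unfolding models_def
proof
  fix a
  assume "a \<in> Sat C"
  then show "satisfies \<theta> a"
  proof (induction rule: Sat.induct)
    case (base c a)
    then show ?case
      using assms satisfies_atomize_iff unfolding models_def by blast
  next
    case (trans \<phi> d S1 S2 \<psi> S3 a)
    from trans.IH have "satisfies \<theta> (\<phi> \<union> \<psi>, d, S1, S3)"
      by (rule satisfies_trans)
    then show ?case
      using trans.hyps(3) satisfies_atomize_iff by blast
  next
    case (satisf \<phi> d k X \<psi> d' S1 S2 a)
    from satisf.IH have "satisfies \<theta> (\<phi> \<union> \<psi>, d', S1, S2)"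
      by (rule satisfies_discharge_guard)
    then show ?case
      using satisf.hyps(3) satisfies_atomize_iff by blast
  next
    case (weaken \<phi> d X Y \<psi> k d' S1 S2 a)
    from weaken.IH have "satisfies \<theta> (\<phi> \<union> \<psi> \<union> {(k, X, d)}, d', S1, S2)"
      by (rule satisfies_weaken_guard)
    then show ?case
      using weaken.hyps(3) satisfies_atomize_iff by blast
  qed
qed

lemma models_of_models_Sat:
  assumes "models \<theta> (Sat C)"
  shows "models \<theta> C"
  unfolding models_def
proof
  fix c
  assume "c \<in> C"
  with assms have "\<forall>a\<in>atomize c. satisfies \<theta> a"
    unfolding models_def by (blast intro: Sat.base)
  then show "satisfies \<theta> c"
    by (simp only: satisfies_atomize_iff)
qed

theorem theorem8p3:
  fixes D :: "'d set" and Con :: "'d \<Rightarrow> 'k set"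
    and C :: "('v::countable, 'k, 'd) constr set"
    and \<theta> :: "('v, 'k, 'd) assignment"
  assumes "finite D" and "\<forall>d\<in>D. finite (Con d)"
    and "finite C" and "\<forall>c\<in>C. wf_constr D Con c"
    and "is_assignment D Con \<theta>"
  shows "models \<theta> C \<longleftrightarrow> models \<theta> (Sat C)"
  using models_Sat models_of_models_Sat by blast

end
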